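(* Let $G=(V,E)$ be a complete (directed or undirected) graph on $n$ vertices with cost function $c: V\times V\to\mathbb{R}$, and let $k,l$ be integers with $1\le k<l\le n$. Suppose there are no vertices $a,b,w\in V$ with $b\neq w$ and $c(a,b)=c(a,w)$. Then the length of the tour returned by $l$-RNN on $G$ is less than or equal to the length of the tour returned by $k$-RNN on $G$.
   Context: A tour is an ordering $T=(v_1,\dots,v_n)$ of all vertices of $V$ (a Hamiltonian cycle); its length is $\sum_{i=1}^{n-1} c(v_i,v_{i+1}) + c(v_n,v_1)$. For an integer $k\ge 1$, the $k$-Repetitive-Nearest-Neighbor ($k$-RNN) algorithm works as follows. Step 1: for every ordered sequence $(v_1,\dots,v_k)$ of $k$ distinct vertices, form the partial tour $T=(v_1,\dots,v_k)$ and mark these vertices visited. Step 2: set $i=k$; while unvisited vertices remain, let $v_{i+1}$ be an unvisited vertex minimizing $c(v_i,\cdot)$ over unvisited vertices (if there are several, any one is chosen), append $v_{i+1}$ to $T$, mark it visited, and increment $i$. Step 3: among all $\frac{n!}{(n-k)!}$ tours so constructed, return one of minimum length. The result of a run is the length of the returned tour. *)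

theory Defs
  imports Complex_Main
begin

definition tour_length :: "('a \<Rightarrow> 'a \<Rightarrow> real) \<Rightarrow> 'a list \<Rightarrow> real" where
  "tour_length c T = (\<Sum>i<length T - 1. c (T ! i) (T ! (i + 1))) + c (last T) (hd T)"

text \<open>T is a tour of V that can be produced by Step 2 of k-RNN from its first k
  vertices: every vertex at (0-based) position i >= k is an unvisited vertex minimizing
  the cost from the previous vertex (ties may be broken arbitrarily).\<close>
definition nn_tour :: "'a set \<Rightarrow> ('a \<Rightarrow> 'a \<Rightarrow> real) \<Rightarrow> nat \<Rightarrow> 'a list \<Rightarrow> bool" where
  "nn_tour V c k T \<longleftrightarrow> distinct T \<and> set T = V \<and>
     (\<forall>i. k \<le> i \<and> i < length T \<longrightarrow>
        (\<forall>x \<in> V - set (take i T). c (T ! (i - 1)) (T ! i) \<le> c (T ! (i - 1)) x))"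

definition start_seqs :: "'a set \<Rightarrow> nat \<Rightarrow> 'a list set" where
  "start_seqs V k = {p. distinct p \<and> set p \<subseteq> V \<and> length p = k}"

text \<open>r is a possible result of a run of k-RNN: for each starting sequence one tour is
  constructed (with some tie-breaking), and the minimum tour length is returned.\<close>
definition rnn_result :: "'a set \<Rightarrow> ('a \<Rightarrow> 'a \<Rightarrow> real) \<Rightarrow> nat \<Rightarrow> real \<Rightarrow> bool" where
  "rnn_result V c k r \<longleftrightarrow>
     (\<exists>f. (\<forall>p \<in> start_seqs V k. take k (f p) = p \<and> nn_tour V c k (f p)) \<and>
          r = Min ((\<lambda>p. tour_length c (f p)) ` start_seqs V k))"

end

theory Submission
  imports Defs
begin

text \<open>If the costs out of every vertex are pairwise distinct, each nearest-neighbour step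
  has a unique choice, so a nearest-neighbour tour is determined by any of its prefixes of
  positive length. A tour built by k-RNN from a start sequence obeys the nearest-neighbour
  rule from position l on as well, hence it is exactly the tour l-RNN builds from its first
  l vertices. Every candidate of k-RNN is therefore a candidate of l-RNN, and the minimum
  over the larger family is no larger.\<close>

lemma nn_tour_length: "nn_tour V c k T \<Longrightarrow> length T = card V"
  unfolding nn_tour_def by (metis distinct_card)

lemma nn_tour_mono: "nn_tour V c k T \<Longrightarrow> k \<le> l \<Longrightarrow> nn_tour V c l T"
  unfolding nn_tour_def by auto

lemma nth_notin_set_take: "distinct xs \<Longrightarrow> i < length xs \<Longrightarrow> xs ! i \<notin> set (take i xs)"
  by (auto simp: in_set_conv_nth nth_eq_iff_index_eq)

lemma nn_tour_nth_unique:
  assumes inj: "\<And>a. a \<in> V \<Longrightarrow> inj_on (c a) V"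
    and T1: "nn_tour V c l T1" and T2: "nn_tour V c l T2"
    and "0 < l" "l \<le> i" "i < length T1"
    and prefix: "take i T1 = take i T2"
  shows "T1 ! i = T2 ! i"
proof -
  have "length T1 = length T2"
    using T1 T2 by (simp add: nn_tour_length)
  with T1 T2 \<open>i < length T1\<close> have unvisited:
    "T1 ! i \<in> V - set (take i T1)" "T2 ! i \<in> V - set (take i T2)"
    by (auto simp: nn_tour_def nth_notin_set_take)
  have "T1 ! (i - 1) = T2 ! (i - 1)"
    using prefix \<open>0 < l\<close> \<open>l \<le> i\<close> by (metis diff_less less_le_trans nth_take zero_less_one)
  moreover have "c (T1 ! (i - 1)) (T1 ! i) \<le> c (T1 ! (i - 1)) (T2 ! i)"
    using T1 \<open>l \<le> i\<close> \<open>i < length T1\<close> unvisited prefix by (auto simp: nn_tour_def)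
  moreover have "c (T2 ! (i - 1)) (T2 ! i) \<le> c (T2 ! (i - 1)) (T1 ! i)"
    using T2 \<open>l \<le> i\<close> \<open>i < length T1\<close> \<open>length T1 = length T2\<close> unvisited prefix
    by (auto simp: nn_tour_def)
  ultimately have "c (T1 ! (i - 1)) (T1 ! i) = c (T1 ! (i - 1)) (T2 ! i)"
    by simp
  moreover have "T1 ! (i - 1) \<in> V"
    using T1 \<open>i < length T1\<close> by (auto simp: nn_tour_def)
  ultimately show ?thesis
    using inj unvisited by (meson DiffD1 inj_onD)
qed

lemma nn_tour_unique:
  assumes inj: "\<And>a. a \<in> V \<Longrightarrow> inj_on (c a) V"
    and T1: "nn_tour V c l T1" and T2: "nn_tour V c l T2"
    and "0 < l" and start: "take l T1 = take l T2"
  shows "T1 = T2"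
proof -
  have length_eq: "length T1 = length T2"
    using T1 T2 by (simp add: nn_tour_length)
  have "take i T1 = take i T2" if "i \<le> length T1" for i
    using that
  proof (induction i)
    case 0
    show ?case by simp
  next
    case (Suc i)
    then have prefix: "take i T1 = take i T2" and "i < length T1"
      by simp_all
    show ?case
    proof (cases "i < l")
      case True
      then show ?thesis
        using start by (metis Suc_leI min.absorb1 take_take)
    next
      case False
      then have "T1 ! i = T2 ! i"
        using nn_tour_nth_unique[OF inj T1 T2 \<open>0 < l\<close> _ \<open>i < length T1\<close> prefix] by simp
      then show ?thesis
        using prefix \<open>i < length T1\<close> length_eq by (simp add: take_Suc_conv_app_nth)
    qed
  qed
  then show ?thesis
    using length_eq by (metis order_refl take_all)
qed

lemma finite_start_seqs: "finite V \<Longrightarrow> finite (start_seqs V k)"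
  unfolding start_seqs_def
  by (rule finite_subset[OF _ finite_lists_length_eq[of V k]]) auto

lemma start_seqs_nonempty:
  assumes "finite V" and "k \<le> card V"
  shows "start_seqs V k \<noteq> {}"
proof -
  obtain xs where "set xs = V" "distinct xs"
    using finite_distinct_list[OF \<open>finite V\<close>] by blast
  then have "take k xs \<in> start_seqs V k"
    using \<open>k \<le> card V\<close> by (auto simp: start_seqs_def distinct_card dest: in_set_takeD)
  then show ?thesis by blast
qed

lemma rnn_result_attained:
  assumes "finite V" and "k \<le> card V" and "rnn_result V c k r"
  obtains T where "nn_tour V c k T" and "r = tour_length c T"
proof -
  obtain f where f: "\<forall>p \<in> start_seqs V k. take k (f p) = p \<and> nn_tour V c k (f p)"
    and r: "r = Min ((\<lambda>p. tour_length c (f p)) ` start_seqs V k)"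
    using \<open>rnn_result V c k r\<close> unfolding rnn_result_def by blast
  have "r \<in> (\<lambda>p. tour_length c (f p)) ` start_seqs V k"
    unfolding r using assms(1,2)
    by (intro Min_in) (simp_all add: finite_start_seqs start_seqs_nonempty)
  then show thesis
    using f that by blast
qed

lemma rnn_result_le_nn_tour:
  assumes "finite V" and inj: "\<And>a. a \<in> V \<Longrightarrow> inj_on (c a) V"
    and "0 < l" and "l \<le> card V"
    and "rnn_result V c l r" and T: "nn_tour V c l T"
  shows "r \<le> tour_length c T"
proof -
  obtain f where f: "\<forall>p \<in> start_seqs V l. take l (f p) = p \<and> nn_tour V c l (f p)"
    and r: "r = Min ((\<lambda>p. tour_length c (f p)) ` start_seqs V l)"
    using \<open>rnn_result V c l r\<close> unfolding rnn_result_def by blast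
  define p where "p = take l T"
  have p: "p \<in> start_seqs V l"
    using T \<open>l \<le> card V\<close> nn_tour_length[OF T]
    by (auto simp: p_def start_seqs_def nn_tour_def dest: in_set_takeD)
  then have "f p = T"
    using nn_tour_unique[OF inj _ T \<open>0 < l\<close>] f p_def by auto
  then show ?thesis
    unfolding r using finite_start_seqs[OF \<open>finite V\<close>] p
    by (metis Min_le finite_imageI image_eqI)
qed

theorem theorem1:
  fixes V :: "'a set" and c :: "'a \<Rightarrow> 'a \<Rightarrow> real" and n k l :: nat and rk rl :: real
  assumes "finite V" and "card V = n"
    and "1 \<le> k" and "k < l" and "l \<le> n"
    and "\<not> (\<exists>a\<in>V. \<exists>b\<in>V. \<exists>w\<in>V. b \<noteq> w \<and> c a b = c a w)"
    and "rnn_result V c l rl" and "rnn_result V c k rk"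
  shows "rl \<le> rk"
proof -
  have inj: "inj_on (c a) V" if "a \<in> V" for a
    using assms(6) that by (auto simp: inj_on_def)
  obtain T where T: "nn_tour V c k T" and rk: "rk = tour_length c T"
    using rnn_result_attained[OF assms(1) _ assms(8)] assms(2,4,5) by auto
  have "nn_tour V c l T"
    using nn_tour_mono[OF T] assms(4) by simp
  then show ?thesis
    using rnn_result_le_nn_tour[OF assms(1) inj _ _ assms(7)] assms(2-5) rk by simp
qed

end
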